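(* Let $d\ge1$ and $t\ge1$ be integers, $M\ge1$, $\rho>0$, and let $f:[0,1]^d\to\mathbb{R}$ be $\rho$-Lipschitz with respect to the $1$-norm. Let $a_1,\dots,a_{(t+1)^d-1}$ be the coefficients produced by the construction described in the context. Then $|a_i|\le 2^{d-1}d\rho$ for every $i$.
   Context: Let $\sigma(z)=\max(z,0)$ and $k=(t+1)^d$. For an integer $0\le i\le k-1$ let $\boldsymbol\pi^i$ be its base-$(t+1)$ digit vector ($0\le\pi^i_r\le t$, $i=\sum_{r=1}^d\pi^i_r(t+1)^{d-r}$). For parameters $a_j,b_{1,j},\dots,b_{d,j}$ define $\hat g_j(\mathbf{x})=a_j\,\sigma\big(\sum_{r=1}^d -M\sigma(-x_r+b_{r,j})+\tfrac1t\big)$. Construction: set $b=f(\mathbf{0})$; for $i=1,\dots,k-1$ in order: let $\hat y=b+\sum_{j=1}^{i-1}\hat g_j(\boldsymbol\pi^i/t)$, set $b_{r,i}=\pi^i_r/t$ for $r=1,\dots,d$, and set $a_i=t\big(f(\boldsymbol\pi^i/t)-\hat y\big)$. $f$ is $\rho$-Lipschitz if $|f(\mathbf{x})-f(\mathbf{x}')|\le\rho\|\mathbf{x}-\mathbf{x}'\|_1$. *)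

theory Defs
  imports Complex_Main
begin

text \<open>Points of [0,1]^d are represented as functions nat => real, coordinates 1..d,
  all other coordinates being 0.\<close>

definition sig :: "real \<Rightarrow> real" where
  "sig z = max z 0"

definition unit_cube :: "nat \<Rightarrow> (nat \<Rightarrow> real) set" where
  "unit_cube d = {x. \<forall>r. (r \<in> {1..d} \<longrightarrow> 0 \<le> x r \<and> x r \<le> 1) \<and> (r \<notin> {1..d} \<longrightarrow> x r = 0)}"

definition lipschitz1_on :: "nat \<Rightarrow> real \<Rightarrow> ((nat \<Rightarrow> real) \<Rightarrow> real) \<Rightarrow> bool" where
  "lipschitz1_on d \<rho> f \<longleftrightarrow>
     (\<forall>x\<in>unit_cube d. \<forall>x'\<in>unit_cube d. \<bar>f x - f x'\<bar> \<le> \<rho> * (\<Sum>r=1..d. \<bar>x r - x' r\<bar>))"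

definition digit :: "nat \<Rightarrow> nat \<Rightarrow> nat \<Rightarrow> nat \<Rightarrow> nat" where
  "digit t d i r = (i div (t+1)^(d-r)) mod (t+1)"

definition grid :: "nat \<Rightarrow> nat \<Rightarrow> nat \<Rightarrow> (nat \<Rightarrow> real)" where
  "grid t d i = (\<lambda>r. if r \<in> {1..d} then real (digit t d i r) / real t else 0)"

definition ghat :: "nat \<Rightarrow> nat \<Rightarrow> real \<Rightarrow> real \<Rightarrow> (nat \<Rightarrow> real) \<Rightarrow> (nat \<Rightarrow> real) \<Rightarrow> real" where
  "ghat d t M a b x = a * sig ((\<Sum>r=1..d. - M * sig (- x r + b r)) + 1 / real t)"

primrec coefs :: "((nat \<Rightarrow> real) \<Rightarrow> real) \<Rightarrow> nat \<Rightarrow> nat \<Rightarrow> real \<Rightarrow> nat \<Rightarrow> real list" where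
  "coefs f d t M 0 = []"
| "coefs f d t M (Suc n) = coefs f d t M n @
     [real t * (f (grid t d (Suc n)) -
        (f (\<lambda>_. 0) + (\<Sum>j=1..n. ghat d t M (coefs f d t M n ! (j - 1)) (grid t d j) (grid t d (Suc n)))))]"

definition coef :: "((nat \<Rightarrow> real) \<Rightarrow> real) \<Rightarrow> nat \<Rightarrow> nat \<Rightarrow> real \<Rightarrow> nat \<Rightarrow> real" where
  "coef f d t M i = coefs f d t M i ! (i - 1)"

end

theory Submission
  imports Defs
begin

(* At a grid point pi^i/t the j-th unit contributes a_j/t if pi^j <= pi^i componentwise and 0
   otherwise, and the construction makes the network interpolate f on the grid. So f(pi^i/t)
   is the cumulative sum of these contributions over the lower set of pi^i, and Moebius
   inversion on the product of chains recovers a_i/t as the alternating sum of f over the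
   corners pi^i - 1_S, S ranging over subsets of the support of pi^i. Pairing S with S + {r0}
   for a fixed r0 in the support, the two grid points are 1/t apart in l1, so each of the
   2^(|supp| - 1) pairs contributes at most rho/t, giving |a_i| <= 2^(d-1) rho. *)

lemma sum_digits_eq_mod:
  fixes b i :: nat
  shows "(\<Sum>k<n. (i div b^k mod b) * b^k) = i mod b^n"
proof (induction n)
  case 0
  then show ?case by simp
next
  case (Suc n)
  have "i mod b^Suc n = b^n * (i div b^n mod b) + i mod b^n"
    by (metis mod_mult2_eq mult.commute power_Suc2)
  with Suc show ?case by (simp add: mult.commute)
qed

lemma sum_digits_less:
  fixes b :: nat
  assumes "\<And>k. k < n \<Longrightarrow> e k < b"
  shows "(\<Sum>k<n. e k * b^k) < b^n"
  using assms
proof (induction n)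
  case 0
  then show ?case by simp
next
  case (Suc n)
  then have "(\<Sum>k<n. e k * b^k) < b^n" and "Suc (e n) \<le> b"
    by (simp_all add: Suc_leI)
  then have "(\<Sum>k<n. e k * b^k) + e n * b^n < Suc (e n) * b^n"
    by simp
  also have "\<dots> \<le> b * b^n"
    using \<open>Suc (e n) \<le> b\<close> by (rule mult_le_mono1)
  finally show ?case by (simp add: add.commute)
qed

lemma sum_digits_div_mod:
  fixes b :: nat
  assumes "\<And>k. k < n \<Longrightarrow> e k < b" and "m < n"
  shows "(\<Sum>k<n. e k * b^k) div b^m mod b = e m"
  using assms
proof (induction n arbitrary: e m)
  case 0
  then show ?case by simp
next
  case (Suc n)
  define s where "s = (\<Sum>k<n. e (Suc k) * b^k)"
  have split: "(\<Sum>k<Suc n. e k * b^k) = e 0 + b * s"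
    unfolding s_def
    by (simp add: sum.lessThan_Suc_shift sum_distrib_left mult.left_commute del: sum.lessThan_Suc)
  have "e 0 < b" using Suc.prems by simp
  show ?case
  proof (cases m)
    case 0
    with split \<open>e 0 < b\<close> show ?thesis by simp
  next
    case (Suc m')
    have "(e 0 + b * s) div b^m = s div b^m'"
      using Suc \<open>e 0 < b\<close> by (simp add: div_mult2_eq)
    moreover have "s div b^m' mod b = e m"
      unfolding s_def using Suc.IH[of "\<lambda>k. e (Suc k)" m'] Suc.prems Suc by simp
    ultimately show ?thesis using split by simp
  qed
qed

lemma sum_Pow_insert:
  fixes g :: "'a set \<Rightarrow> 'b::comm_monoid_add"
  assumes "finite A" and "a \<notin> A"
  shows "(\<Sum>S\<in>Pow (insert a A). g S) = (\<Sum>S\<in>Pow A. g S + g (insert a S))"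
proof -
  have "inj_on (insert a) (Pow A)"
    using assms(2) by (intro inj_onI) (metis PowD insert_ident subsetD)
  moreover have "Pow A \<inter> insert a ` Pow A = {}"
    using assms(2) by blast
  ultimately show ?thesis
    unfolding Pow_insert using assms(1)
    by (simp add: sum.union_disjoint sum.reindex sum.distrib)
qed

lemma sum_Pow_minus_one_power_card:
  assumes "finite U"
  shows "(\<Sum>S\<in>Pow U. (-1::'a::ring_1) ^ card S) = (if U = {} then 1 else 0)"
proof (cases "U = {}")
  case False
  then have "card {S. S \<subseteq> U \<and> even (card S)} = card {S. S \<subseteq> U \<and> odd (card S)}"
    using card_subsupersets_even_odd[OF assms, of "{}"] by auto
  with False show ?thesis
    using assms by (simp add: sum_alternating_cancels Pow_def)
qed simp

lemma abs_alternating_sum_Pow_le: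
  fixes g :: "'a set \<Rightarrow> real"
  assumes "finite T" and "a \<in> T"
    and "\<And>S. S \<subseteq> T - {a} \<Longrightarrow> \<bar>g S - g (insert a S)\<bar> \<le> B"
  shows "\<bar>\<Sum>S\<in>Pow T. (-1) ^ card S * g S\<bar> \<le> 2 ^ (card T - 1) * B"
proof -
  let ?A = "T - {a}"
  have "finite ?A" using assms(1) by simp
  have "(\<Sum>S\<in>Pow T. (-1) ^ card S * g S)
      = (\<Sum>S\<in>Pow ?A. (-1) ^ card S * g S + (-1) ^ card (insert a S) * g (insert a S))"
    using sum_Pow_insert[OF \<open>finite ?A\<close>, of a] assms(2) by (simp add: insert_absorb)
  also have "\<dots> = (\<Sum>S\<in>Pow ?A. (-1) ^ card S * (g S - g (insert a S)))"
  proof (intro sum.cong refl)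
    fix S assume "S \<in> Pow ?A"
    then have "finite S" and "a \<notin> S"
      using \<open>finite ?A\<close> finite_subset by auto
    then show "(-1) ^ card S * g S + (-1) ^ card (insert a S) * g (insert a S)
        = (-1) ^ card S * (g S - g (insert a S))"
      by (simp add: algebra_simps)
  qed
  finally have "\<bar>\<Sum>S\<in>Pow T. (-1) ^ card S * g S\<bar>
      = \<bar>\<Sum>S\<in>Pow ?A. (-1) ^ card S * (g S - g (insert a S))\<bar>"
    by simp
  also have "\<dots> \<le> (\<Sum>S\<in>Pow ?A. \<bar>g S - g (insert a S)\<bar>)"
    using sum_abs[of "\<lambda>S. (-1) ^ card S * (g S - g (insert a S))" "Pow ?A"]
    by (simp add: abs_mult power_abs)
  also have "\<dots> \<le> (\<Sum>S\<in>Pow ?A. B)"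
    using assms(3) by (intro sum_mono) simp
  also have "\<dots> = 2 ^ (card T - 1) * B"
    using \<open>finite ?A\<close> assms(2) by (simp add: card_Pow)
  finally show ?thesis .
qed

definition decr_on :: "nat set \<Rightarrow> (nat \<Rightarrow> nat) \<Rightarrow> nat \<Rightarrow> nat" where
  "decr_on S p r = (if r \<in> S then p r - 1 else p r)"

lemma alternating_sum_Pow_indicator:
  fixes c :: "'b::comm_ring_1" and q p :: "nat \<Rightarrow> nat"
  assumes "finite I"
  shows "(\<Sum>S\<in>Pow {r\<in>I. 0 < p r}. if \<forall>r\<in>I. q r \<le> decr_on S p r then (-1) ^ card S * c else 0)
       = (if \<forall>r\<in>I. q r = p r then c else 0)"
proof -
  let ?T = "{r\<in>I. 0 < p r}"
  define below where "below \<longleftrightarrow> (\<forall>r\<in>I. q r \<le> p r)"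
  define U where "U = {r\<in>?T. q r < p r}"
  have "finite ?T" and "finite U"
    unfolding U_def using assms by simp_all
  have below_iff: "(\<forall>r\<in>I. q r \<le> decr_on S p r) \<longleftrightarrow> below \<and> S \<subseteq> U"
    if "S \<subseteq> ?T" for S
  proof -
    have "q r \<le> decr_on S p r \<longleftrightarrow> q r \<le> p r \<and> (r \<in> S \<longrightarrow> q r < p r)" if "r \<in> I" for r
      using \<open>S \<subseteq> ?T\<close> that unfolding decr_on_def by auto
    then show ?thesis
      using \<open>S \<subseteq> ?T\<close> unfolding below_def U_def by blast
  qed
  have "(\<Sum>S\<in>Pow ?T. if \<forall>r\<in>I. q r \<le> decr_on S p r then (-1) ^ card S * c else 0)
      = (\<Sum>S\<in>Pow ?T. if below \<and> S \<subseteq> U then (-1) ^ card S * c else 0)"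
    by (intro sum.cong refl) (simp add: below_iff)
  also have "\<dots> = (if below then \<Sum>S\<in>{S\<in>Pow ?T. S \<subseteq> U}. (-1) ^ card S * c else 0)"
    using \<open>finite ?T\<close> sum.inter_filter[of "Pow ?T" "\<lambda>S. (-1) ^ card S * c" "\<lambda>S. S \<subseteq> U"]
    by (cases below) simp_all
  also have "{S\<in>Pow ?T. S \<subseteq> U} = Pow U"
    unfolding U_def by auto
  also have "(\<Sum>S\<in>Pow U. (-1) ^ card S * c) = (if U = {} then c else 0)"
    by (simp add: sum_Pow_minus_one_power_card[OF \<open>finite U\<close>] flip: sum_distrib_right)
  also have "(if below then if U = {} then c else 0 else 0)
      = (if \<forall>r\<in>I. q r = p r then c else 0)"
    unfolding below_def U_def by (auto intro!: antisym simp: not_less dest: bspec)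
  finally show ?thesis .
qed

lemma moebius_inversion_nat_vectors:
  fixes c :: "'a \<Rightarrow> 'b::comm_ring_1" and v :: "'a \<Rightarrow> nat \<Rightarrow> nat"
  assumes "finite J" and "finite I"
  shows "(\<Sum>S\<in>Pow {r\<in>I. 0 < p r}. (-1) ^ card S * (\<Sum>j\<in>{j\<in>J. \<forall>r\<in>I. v j r \<le> decr_on S p r}. c j))
       = (\<Sum>j\<in>{j\<in>J. \<forall>r\<in>I. v j r = p r}. c j)"
proof -
  let ?T = "{r\<in>I. 0 < p r}"
  have "(\<Sum>S\<in>Pow ?T. (-1) ^ card S * (\<Sum>j\<in>{j\<in>J. \<forall>r\<in>I. v j r \<le> decr_on S p r}. c j))
      = (\<Sum>S\<in>Pow ?T. \<Sum>j\<in>J. if \<forall>r\<in>I. v j r \<le> decr_on S p r then (-1) ^ card S * c j else 0)"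
    using assms(1) by (simp add: sum.inter_filter sum_distrib_left if_distrib cong: if_cong)
  also have "\<dots> = (\<Sum>j\<in>J. \<Sum>S\<in>Pow ?T. if \<forall>r\<in>I. v j r \<le> decr_on S p r then (-1) ^ card S * c j else 0)"
    by (rule sum.swap)
  also have "\<dots> = (\<Sum>j\<in>J. if \<forall>r\<in>I. v j r = p r then c j else 0)"
    by (intro sum.cong refl) (rule alternating_sum_Pow_indicator[OF assms(2)])
  also have "\<dots> = (\<Sum>j\<in>{j\<in>J. \<forall>r\<in>I. v j r = p r}. c j)"
    using assms(1) by (simp add: sum.inter_filter)
  finally show ?thesis .
qed

definition digit_vec :: "nat \<Rightarrow> nat \<Rightarrow> nat \<Rightarrow> nat \<Rightarrow> nat" where
  "digit_vec t d i r = (if r \<in> {1..d} then digit t d i r else 0)"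

definition from_digits :: "nat \<Rightarrow> nat \<Rightarrow> (nat \<Rightarrow> nat) \<Rightarrow> nat" where
  "from_digits t d p = (\<Sum>k<d. p (d - k) * (t+1)^k)"

definition is_digit_vec :: "nat \<Rightarrow> nat \<Rightarrow> (nat \<Rightarrow> nat) \<Rightarrow> bool" where
  "is_digit_vec t d p \<longleftrightarrow> (\<forall>r\<in>{1..d}. p r \<le> t) \<and> (\<forall>r. r \<notin> {1..d} \<longrightarrow> p r = 0)"

lemma is_digit_vec_digit_vec: "is_digit_vec t d (digit_vec t d i)"
  unfolding is_digit_vec_def digit_vec_def digit_def
  using less_Suc_eq_le by auto

lemma from_digits_digit_vec:
  assumes "i < (t+1)^d"
  shows "from_digits t d (digit_vec t d i) = i"
proof -
  have "from_digits t d (digit_vec t d i) = (\<Sum>k<d. (i div (t+1)^k mod (t+1)) * (t+1)^k)"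
    unfolding from_digits_def digit_vec_def digit_def by (intro sum.cong) auto
  also have "\<dots> = i"
    using sum_digits_eq_mod assms by simp
  finally show ?thesis .
qed

lemma is_digit_vec_reversed_less:
  assumes "is_digit_vec t d p" and "k < d"
  shows "p (d - k) < t + 1"
proof -
  have "d - k \<in> {1..d}"
    using assms(2) by auto
  with assms(1) have "p (d - k) \<le> t"
    unfolding is_digit_vec_def by blast
  then show ?thesis by simp
qed

lemma from_digits_less:
  assumes "is_digit_vec t d p"
  shows "from_digits t d p < (t+1)^d"
  unfolding from_digits_def using is_digit_vec_reversed_less[OF assms]
  by (rule sum_digits_less)

lemma digit_vec_from_digits:
  assumes "is_digit_vec t d p"
  shows "digit_vec t d (from_digits t d p) = p"
proof
  fix r
  show "digit_vec t d (from_digits t d p) r = p r"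
  proof (cases "r \<in> {1..d}")
    case True
    then have "from_digits t d p div (t+1)^(d-r) mod (t+1) = p (d - (d - r))"
      unfolding from_digits_def
      by (intro sum_digits_div_mod is_digit_vec_reversed_less[OF assms]) auto
    with True show ?thesis
      unfolding digit_vec_def digit_def by simp
  next
    case False
    with assms show ?thesis
      unfolding digit_vec_def is_digit_vec_def by auto
  qed
qed

lemma is_digit_vec_decr_on:
  assumes "is_digit_vec t d p"
  shows "is_digit_vec t d (decr_on S p)"
  using assms unfolding is_digit_vec_def decr_on_def by auto

lemma from_digits_mono:
  assumes "\<And>r. r \<in> {1..d} \<Longrightarrow> p r \<le> q r"
  shows "from_digits t d p \<le> from_digits t d q"
  unfolding from_digits_def using assms by (intro sum_mono) auto

lemma le_of_digit_vec_le:
  assumes "i < (t+1)^d" "j < (t+1)^d"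
    and "\<forall>r\<in>{1..d}. digit_vec t d j r \<le> digit_vec t d i r"
  shows "j \<le> i"
  using from_digits_mono[of d "digit_vec t d j" "digit_vec t d i" t] assms
  by (simp add: from_digits_digit_vec)

lemma grid_digit_vec: "grid t d i r = real (digit_vec t d i r) / real t"
  unfolding grid_def digit_vec_def by simp

lemma grid_in_unit_cube:
  assumes "t \<ge> 1"
  shows "grid t d i \<in> unit_cube d"
proof -
  have "digit_vec t d i r \<le> t" if "r \<in> {1..d}" for r
    using is_digit_vec_digit_vec[of t d i] that unfolding is_digit_vec_def by blast
  then show ?thesis
    using assms unfolding unit_cube_def grid_def digit_vec_def
    by (auto simp: divide_le_eq_1)
qed

lemma sig_orthant_indicator:
  fixes z :: "'a \<Rightarrow> real"
  assumes "finite R" and "0 < h" and "1 \<le> M"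
    and gap: "\<And>r. r \<in> R \<Longrightarrow> z r \<le> 0 \<or> h \<le> z r"
  shows "sig ((\<Sum>r\<in>R. - M * sig (z r)) + h) = (if \<forall>r\<in>R. z r \<le> 0 then h else 0)"
proof (cases "\<forall>r\<in>R. z r \<le> 0")
  case True
  then have "(\<Sum>r\<in>R. - M * sig (z r)) = 0"
    by (intro sum.neutral) (simp add: sig_def)
  with True \<open>0 < h\<close> show ?thesis
    by (simp add: sig_def)
next
  case False
  then obtain r0 where "r0 \<in> R" and "h \<le> z r0"
    using gap by force
  have "h \<le> M * sig (z r0)"
    using \<open>h \<le> z r0\<close> \<open>0 < h\<close> \<open>1 \<le> M\<close> mult_mono[of 1 M h "z r0"] by (simp add: sig_def)
  moreover have "(\<Sum>r\<in>R. - M * sig (z r)) = - M * sig (z r0) + (\<Sum>r\<in>R - {r0}. - M * sig (z r))"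
    using \<open>finite R\<close> \<open>r0 \<in> R\<close> by (rule sum.remove)
  moreover have "(\<Sum>r\<in>R - {r0}. - M * sig (z r)) \<le> 0"
    using \<open>1 \<le> M\<close> by (intro sum_nonpos) (simp add: sig_def)
  ultimately have "(\<Sum>r\<in>R. - M * sig (z r)) + h \<le> 0"
    by linarith
  with False show ?thesis
    by (simp only: if_False) (simp add: sig_def)
qed

lemma ghat_grid:
  assumes "t \<ge> 1" and "M \<ge> 1"
  shows "ghat d t M a (grid t d j) (grid t d i)
       = (if \<forall>r\<in>{1..d}. digit_vec t d j r \<le> digit_vec t d i r then a / real t else 0)"
proof -
  define z where "z r = (real (digit_vec t d j r) - real (digit_vec t d i r)) / real t" for r
  have "- grid t d i r + grid t d j r = z r" for r
    unfolding z_def grid_digit_vec by (simp add: diff_divide_distrib)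
  moreover have "z r \<le> 0 \<or> 1 / real t \<le> z r" for r
  proof (cases "digit_vec t d j r \<le> digit_vec t d i r")
    case True
    then have "real (digit_vec t d j r) - real (digit_vec t d i r) \<le> 0"
      by simp
    then show ?thesis
      unfolding z_def by (simp add: divide_nonpos_nonneg)
  next
    case False
    then have "1 \<le> real (digit_vec t d j r) - real (digit_vec t d i r)"
      by linarith
    then show ?thesis
      unfolding z_def using assms(1) by (simp add: divide_right_mono)
  qed
  moreover have "z r \<le> 0 \<longleftrightarrow> digit_vec t d j r \<le> digit_vec t d i r" for r
    using assms(1) unfolding z_def by (simp add: divide_le_0_iff)
  ultimately show ?thesis
    using sig_orthant_indicator[of "{1..d}" "1 / real t" M z] assms
    unfolding ghat_def by simp
qed

lemma length_coefs: "length (coefs f d t M n) = n"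
  by (induction n) auto

lemma nth_coefs:
  assumes "k < n"
  shows "coefs f d t M n ! k = coef f d t M (Suc k)"
  using assms
proof (induction n)
  case 0
  then show ?case by simp
next
  case (Suc n)
  then show ?case
    unfolding coef_def by (cases "k = n") (simp_all add: nth_append length_coefs)
qed

lemma coef_Suc:
  "coef f d t M (Suc n) = real t * (f (grid t d (Suc n)) -
     (f (\<lambda>_. 0) + (\<Sum>j=1..n. ghat d t M (coef f d t M j) (grid t d j) (grid t d (Suc n)))))"
proof -
  have "(\<Sum>j=1..n. ghat d t M (coefs f d t M n ! (j - 1)) (grid t d j) (grid t d (Suc n)))
      = (\<Sum>j=1..n. ghat d t M (coef f d t M j) (grid t d j) (grid t d (Suc n)))"
    by (intro sum.cong) (auto simp: nth_coefs)
  then show ?thesis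
    unfolding coef_def by (simp add: nth_append length_coefs)
qed

text \<open>The bias f(0) plays the role of unit 0.\<close>
definition increment :: "((nat \<Rightarrow> real) \<Rightarrow> real) \<Rightarrow> nat \<Rightarrow> nat \<Rightarrow> real \<Rightarrow> nat \<Rightarrow> real" where
  "increment f d t M j = (if j = 0 then f (\<lambda>_. 0) else coef f d t M j / real t)"

lemma grid_expansion:
  assumes "t \<ge> 1" and "M \<ge> 1" and "i < (t+1)^d"
  shows "f (grid t d i) = (\<Sum>j\<in>{j\<in>{..<(t+1)^d}. \<forall>r\<in>{1..d}. digit_vec t d j r \<le> digit_vec t d i r}.
           increment f d t M j)"
proof -
  let ?below = "\<lambda>j. \<forall>r\<in>{1..d}. digit_vec t d j r \<le> digit_vec t d i r"
  have digit_vec_0: "digit_vec t d 0 = (\<lambda>_. 0)"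
    unfolding digit_vec_def digit_def by auto
  have below_set: "{j\<in>{..<(t+1)^d}. ?below j} = {j\<in>{..i}. ?below j}"
    using le_of_digit_vec_le[OF assms(3)] assms(3) by auto
  have "(\<Sum>j\<in>{j\<in>{..<(t+1)^d}. ?below j}. increment f d t M j)
      = (\<Sum>j\<le>i. if ?below j then increment f d t M j else 0)"
    unfolding below_set by (rule sum.inter_filter) simp
  also have "\<dots> = f (grid t d i)"
  proof (cases i)
    case 0
    have "grid t d 0 = (\<lambda>_. 0)"
      using digit_vec_0 by (auto simp: grid_digit_vec)
    with 0 show ?thesis
      by (simp add: increment_def)
  next
    case (Suc n)
    have "(\<Sum>j\<le>i. if ?below j then increment f d t M j else 0)
        = f (\<lambda>_. 0) + (\<Sum>j=1..n. if ?below j then increment f d t M j else 0)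
          + coef f d t M (Suc n) / real t"
      using Suc digit_vec_0 by (simp add: increment_def atMost_atLeast0 sum.atLeast_Suc_atMost)
    also have "(\<Sum>j=1..n. if ?below j then increment f d t M j else 0)
        = (\<Sum>j=1..n. ghat d t M (coef f d t M j) (grid t d j) (grid t d (Suc n)))"
      using Suc by (intro sum.cong) (auto simp: ghat_grid[OF assms(1,2)] increment_def)
    finally show ?thesis
      using Suc assms(1) by (simp add: coef_Suc)
  qed
  finally show ?thesis ..
qed

lemma coef_eq_alternating_sum:
  assumes "t \<ge> 1" and "M \<ge> 1" and "1 \<le> i" and "i < (t+1)^d"
  defines "p \<equiv> digit_vec t d i"
  shows "coef f d t M i / real t
       = (\<Sum>S\<in>Pow {r\<in>{1..d}. 0 < p r}. (-1) ^ card S * f (grid t d (from_digits t d (decr_on S p))))"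
proof -
  let ?N = "(t+1)^d"
  have "f (grid t d (from_digits t d (decr_on S p)))
      = (\<Sum>j\<in>{j\<in>{..<?N}. \<forall>r\<in>{1..d}. digit_vec t d j r \<le> decr_on S p r}. increment f d t M j)" for S
  proof -
    have "is_digit_vec t d (decr_on S p)"
      unfolding p_def by (intro is_digit_vec_decr_on is_digit_vec_digit_vec)
    then show ?thesis
      using grid_expansion[OF assms(1,2) from_digits_less] by (simp add: digit_vec_from_digits)
  qed
  then have "(\<Sum>S\<in>Pow {r\<in>{1..d}. 0 < p r}. (-1) ^ card S * f (grid t d (from_digits t d (decr_on S p))))
      = (\<Sum>j\<in>{j\<in>{..<?N}. \<forall>r\<in>{1..d}. digit_vec t d j r = p r}. increment f d t M j)"
    using moebius_inversion_nat_vectors[where J = "{..<?N}" and I = "{1..d}" and p = p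
        and c = "increment f d t M" and v = "digit_vec t d"]
    by simp
  also have "{j\<in>{..<?N}. \<forall>r\<in>{1..d}. digit_vec t d j r = p r} = {i}"
    using le_of_digit_vec_le assms(4) unfolding p_def by (auto intro: antisym)
  finally show ?thesis
    using assms(3) by (simp add: increment_def)
qed

lemma lipschitz_grid_decr_on:
  assumes "t \<ge> 1" and "lipschitz1_on d \<rho> f" and "is_digit_vec t d p"
    and "a \<in> {1..d}" and "0 < p a" and "a \<notin> S"
  shows "\<bar>f (grid t d (from_digits t d (decr_on S p)))
           - f (grid t d (from_digits t d (decr_on (insert a S) p)))\<bar> \<le> \<rho> / real t"
proof -
  let ?x = "\<lambda>S. grid t d (from_digits t d (decr_on S p))"
  have coord: "?x S r = real (decr_on S p r) / real t" for S r
    using assms(3) by (simp add: grid_digit_vec digit_vec_from_digits is_digit_vec_decr_on)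
  have "\<bar>?x S r - ?x (insert a S) r\<bar> = (if r = a then 1 / real t else 0)" for r
    using assms(5,6) unfolding coord decr_on_def by (auto simp: diff_divide_distrib[symmetric] of_nat_diff)
  then have "(\<Sum>r=1..d. \<bar>?x S r - ?x (insert a S) r\<bar>) = 1 / real t"
    using assms(4) by simp
  with assms(1,2) show ?thesis
    unfolding lipschitz1_on_def using grid_in_unit_cube by (metis mult_1_right times_divide_eq_right)
qed

lemma abs_coef_le:
  assumes "t \<ge> 1" and "M \<ge> 1" and "0 \<le> \<rho>" and "lipschitz1_on d \<rho> f"
    and "1 \<le> i" and "i < (t+1)^d"
  shows "\<bar>coef f d t M i\<bar> \<le> 2^(d-1) * \<rho>"
proof -
  define p where "p = digit_vec t d i"
  define T where "T = {r\<in>{1..d}. 0 < p r}"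
  have "T \<noteq> {}"
  proof
    assume "T = {}"
    then have "\<forall>r\<in>{1..d}. digit_vec t d i r \<le> digit_vec t d 0 r"
      unfolding T_def p_def by auto
    then show False
      using le_of_digit_vec_le[of 0 t d i] assms(5,6) by simp
  qed
  then obtain a where "a \<in> T"
    by blast
  have "card T \<le> card {1..d}"
    unfolding T_def by (intro card_mono) auto
  then have "card T \<le> d"
    by simp
  have "\<bar>coef f d t M i / real t\<bar> \<le> 2 ^ (card T - 1) * (\<rho> / real t)"
    unfolding coef_eq_alternating_sum[OF assms(1,2,5,6)] p_def[symmetric] T_def[symmetric]
  proof (rule abs_alternating_sum_Pow_le)
    show "finite T" and "a \<in> T"
      using \<open>a \<in> T\<close> unfolding T_def by simp_all
    fix S assume "S \<subseteq> T - {a}"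
    with \<open>a \<in> T\<close> show "\<bar>f (grid t d (from_digits t d (decr_on S p)))
        - f (grid t d (from_digits t d (decr_on (insert a S) p)))\<bar> \<le> \<rho> / real t"
      unfolding T_def p_def
      by (intro lipschitz_grid_decr_on assms(1,4) is_digit_vec_digit_vec) auto
  qed
  also have "\<dots> \<le> 2 ^ (d - 1) * (\<rho> / real t)"
    using \<open>card T \<le> d\<close> assms(3) by (intro mult_right_mono power_increasing) auto
  finally show ?thesis
    using assms(1) by (simp add: abs_div divide_le_cancel)
qed

theorem lemmaA6:
  fixes d t :: nat and M \<rho> :: real and f :: "(nat \<Rightarrow> real) \<Rightarrow> real"
  assumes "d \<ge> 1" and "t \<ge> 1" and "M \<ge> 1" and "\<rho> > 0"
    and "lipschitz1_on d \<rho> f"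
    and "1 \<le> i" and "i \<le> (t+1)^d - 1"
  shows "\<bar>coef f d t M i\<bar> \<le> 2^(d-1) * real d * \<rho>"
proof -
  have "i < (t+1)^d"
    using assms(7) by (simp add: Suc_le_eq le_diff_conv2)
  then have "\<bar>coef f d t M i\<bar> \<le> 2^(d-1) * \<rho>"
    using abs_coef_le assms(2-6) by simp
  also have "\<dots> \<le> 2^(d-1) * real d * \<rho>"
    using assms(1,4) by simp
  finally show ?thesis .
qed

end
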